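(* Let $n,m\in\omega\cup\{\infty\}$. Every $C_{n,m}$-homogeneous linear ordering is $sp$-homogeneous.
   Context: For a linear ordering $L$, $s(x)$ is the immediate successor of $x$ if it exists and $x$ otherwise, $p(x)$ the immediate predecessor if it exists and $x$ otherwise; $L$ is $sp$-homogeneous if $(L,<,s,p)$ is homogeneous (every isomorphism between finitely generated substructures extends to an automorphism). For $i\in\omega$: $S_i(x)$ holds iff $x$ has exactly $i$ successors (i.e. exactly $i$ elements $y>x$ with only finitely many elements between $x$ and $y$); $P_j(x)$ holds iff $x$ has exactly $j$ predecessors (defined dually); $Adj_k(x,y)$ holds iff there are exactly $k$ elements strictly between $x$ and $y$. $L$ is $C_{n,m}$-homogeneous if its expansion by the definable relations $\{S_i\}_{i<n}$, $\{P_j\}_{j<m}$, $\{Adj_k\}_{k<n+m}$ (with $i<\infty$ meaning all $i\in\omega$) is homogeneous, i.e. every isomorphism between finite substructures of the expansion extends to an automorphism. *)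

theory Defs
  imports Main "HOL-Library.Extended_Nat"
begin

text \<open>A linear ordering is represented by a carrier set A inside a linearly ordered type.\<close>

definition imm_succ :: "'a::linorder set \<Rightarrow> 'a \<Rightarrow> 'a \<Rightarrow> bool" where
  "imm_succ A x y \<longleftrightarrow> y \<in> A \<and> x < y \<and> (\<forall>z\<in>A. \<not> (x < z \<and> z < y))"

definition imm_pred :: "'a::linorder set \<Rightarrow> 'a \<Rightarrow> 'a \<Rightarrow> bool" where
  "imm_pred A x y \<longleftrightarrow> y \<in> A \<and> y < x \<and> (\<forall>z\<in>A. \<not> (y < z \<and> z < x))"

definition sfun :: "'a::linorder set \<Rightarrow> 'a \<Rightarrow> 'a" where
  "sfun A x = (if \<exists>y. imm_succ A x y then (THE y. imm_succ A x y) else x)"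

definition pfun :: "'a::linorder set \<Rightarrow> 'a \<Rightarrow> 'a" where
  "pfun A x = (if \<exists>y. imm_pred A x y then (THE y. imm_pred A x y) else x)"

definition betw :: "'a::linorder set \<Rightarrow> 'a \<Rightarrow> 'a \<Rightarrow> 'a set" where
  "betw A x y = {z \<in> A. min x y < z \<and> z < max x y}"

definition succs :: "'a::linorder set \<Rightarrow> 'a \<Rightarrow> 'a set" where
  "succs A x = {y \<in> A. x < y \<and> finite (betw A x y)}"

definition preds :: "'a::linorder set \<Rightarrow> 'a \<Rightarrow> 'a set" where
  "preds A x = {y \<in> A. y < x \<and> finite (betw A y x)}"

definition S_rel :: "'a::linorder set \<Rightarrow> nat \<Rightarrow> 'a \<Rightarrow> bool" where
  "S_rel A i x \<longleftrightarrow> finite (succs A x) \<and> card (succs A x) = i"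

definition P_rel :: "'a::linorder set \<Rightarrow> nat \<Rightarrow> 'a \<Rightarrow> bool" where
  "P_rel A j x \<longleftrightarrow> finite (preds A x) \<and> card (preds A x) = j"

definition Adj_rel :: "'a::linorder set \<Rightarrow> nat \<Rightarrow> 'a \<Rightarrow> 'a \<Rightarrow> bool" where
  "Adj_rel A k x y \<longleftrightarrow> finite (betw A x y) \<and> card (betw A x y) = k"

inductive_set sp_closure :: "'a::linorder set \<Rightarrow> 'a set \<Rightarrow> 'a set" for A B where
  base: "x \<in> B \<Longrightarrow> x \<in> sp_closure A B"
| succ: "x \<in> sp_closure A B \<Longrightarrow> sfun A x \<in> sp_closure A B"
| pred: "x \<in> sp_closure A B \<Longrightarrow> pfun A x \<in> sp_closure A B"

definition order_iso_on :: "'a::linorder set \<Rightarrow> ('a \<Rightarrow> 'a) \<Rightarrow> bool" where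
  "order_iso_on C f \<longleftrightarrow> (\<forall>x\<in>C. \<forall>y\<in>C. x < y \<longleftrightarrow> f x < f y)"

definition sp_automorphism :: "'a::linorder set \<Rightarrow> ('a \<Rightarrow> 'a) \<Rightarrow> bool" where
  "sp_automorphism A g \<longleftrightarrow> bij_betw g A A \<and> order_iso_on A g
     \<and> (\<forall>x\<in>A. g (sfun A x) = sfun A (g x) \<and> g (pfun A x) = pfun A (g x))"

definition sp_homogeneous :: "'a::linorder set \<Rightarrow> bool" where
  "sp_homogeneous A \<longleftrightarrow>
     (\<forall>B f. finite B \<and> B \<subseteq> A \<and> f ` sp_closure A B \<subseteq> A
        \<and> order_iso_on (sp_closure A B) f
        \<and> (\<forall>x\<in>sp_closure A B. f (sfun A x) = sfun A (f x) \<and> f (pfun A x) = pfun A (f x))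
        \<longrightarrow> (\<exists>g. sp_automorphism A g \<and> (\<forall>x\<in>sp_closure A B. g x = f x)))"

definition Cnm_preserving :: "enat \<Rightarrow> enat \<Rightarrow> 'a::linorder set \<Rightarrow> 'a set \<Rightarrow> ('a \<Rightarrow> 'a) \<Rightarrow> bool" where
  "Cnm_preserving n m A C f \<longleftrightarrow> order_iso_on C f
     \<and> (\<forall>i. enat i < n \<longrightarrow> (\<forall>x\<in>C. S_rel A i x \<longleftrightarrow> S_rel A i (f x)))
     \<and> (\<forall>j. enat j < m \<longrightarrow> (\<forall>x\<in>C. P_rel A j x \<longleftrightarrow> P_rel A j (f x)))
     \<and> (\<forall>k. enat k < n + m \<longrightarrow> (\<forall>x\<in>C. \<forall>y\<in>C. Adj_rel A k x y \<longleftrightarrow> Adj_rel A k (f x) (f y)))"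

definition Cnm_homogeneous :: "enat \<Rightarrow> enat \<Rightarrow> 'a::linorder set \<Rightarrow> bool" where
  "Cnm_homogeneous n m A \<longleftrightarrow>
     (\<forall>B f. finite B \<and> B \<subseteq> A \<and> f ` B \<subseteq> A \<and> Cnm_preserving n m A B f
        \<longrightarrow> (\<exists>g. bij_betw g A A \<and> Cnm_preserving n m A A g \<and> (\<forall>x\<in>B. g x = f x)))"

end

theory Submission
  imports Defs
begin

(*
  An sp-isomorphism f between finitely generated substructures already preserves every
  relation of the C_{n,m} expansion.  The elements at finite distance above x are exactly
  the iterates s^k x lying above x (dually for p), and for x < y the set of elements strictly
  between them is finite iff y is such an iterate, in which case it consists of the smaller
  iterates.  The domain C = sp_closure A B is closed under s and p and f commutes with them,
  so f maps these sets for x onto the corresponding sets for f x and preserves their sizes.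
  Hence C_{n,m}-homogeneity extends the restriction of f to B to an automorphism g of (A,<).
  Order automorphisms commute with s and p, so g agrees with f on all of C.
*)

lemma betw_commute: "betw A x y = betw A y x"
  by (simp add: betw_def min.commute max.commute)

lemma betw_self: "betw A x x = {}"
  using less_asym by (auto simp: betw_def)

lemma betw_less: "x < y \<Longrightarrow> betw A x y = {z \<in> A. x < z \<and> z < y}"
  by (simp add: betw_def)

lemma imm_succ_iff_betw: "imm_succ A x y \<longleftrightarrow> y \<in> A \<and> x < y \<and> betw A x y = {}"
  by (auto simp: imm_succ_def betw_less)

lemma imm_pred_iff_betw: "imm_pred A x y \<longleftrightarrow> y \<in> A \<and> y < x \<and> betw A y x = {}"
  by (auto simp: imm_pred_def betw_less)

lemma imm_succ_unique: "imm_succ A x y \<Longrightarrow> imm_succ A x y' \<Longrightarrow> y = y'"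
  unfolding imm_succ_def by (metis neqE)

lemma sfun_eqI:
  assumes "imm_succ A x y"
  shows "sfun A x = y"
proof -
  have "(THE y. imm_succ A x y) = y"
    using assms imm_succ_unique by (blast intro: the_equality)
  then show ?thesis
    using assms by (auto simp: sfun_def)
qed

lemma imm_pred_unique: "imm_pred A x y \<Longrightarrow> imm_pred A x y' \<Longrightarrow> y = y'"
  unfolding imm_pred_def by (metis neqE)

lemma pfun_eqI:
  assumes "imm_pred A x y"
  shows "pfun A x = y"
proof -
  have "(THE y. imm_pred A x y) = y"
    using assms imm_pred_unique by (blast intro: the_equality)
  then show ?thesis
    using assms by (auto simp: pfun_def)
qed

lemma imm_succ_sfun: "sfun A x \<noteq> x \<Longrightarrow> imm_succ A x (sfun A x)"
  by (metis sfun_def sfun_eqI)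

lemma imm_pred_pfun: "pfun A x \<noteq> x \<Longrightarrow> imm_pred A x (pfun A x)"
  by (metis pfun_def pfun_eqI)

lemma sfun_in: "x \<in> A \<Longrightarrow> sfun A x \<in> A"
  by (metis imm_succ_def imm_succ_sfun)

lemma pfun_in: "x \<in> A \<Longrightarrow> pfun A x \<in> A"
  by (metis imm_pred_def imm_pred_pfun)

lemma sfun_gap: "z \<in> A \<Longrightarrow> x < z \<Longrightarrow> \<not> z < sfun A x"
  by (metis imm_succ_def imm_succ_sfun order.asym)

lemma pfun_gap: "z \<in> A \<Longrightarrow> z < x \<Longrightarrow> \<not> pfun A x < z"
  by (metis imm_pred_def imm_pred_pfun order.asym)

section \<open>Finite distance via iterates of s and p\<close>

lemma sfun_funpow_in: "x \<in> A \<Longrightarrow> (sfun A ^^ k) x \<in> A"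
  by (induction k) (simp_all add: sfun_in)

lemma pfun_funpow_in: "x \<in> A \<Longrightarrow> (pfun A ^^ k) x \<in> A"
  by (induction k) (simp_all add: pfun_in)

lemma finite_betw_sfun_funpow: "finite {z \<in> A. x < z \<and> z < (sfun A ^^ k) x}"
proof (induction k)
  case (Suc k)
  let ?w = "(sfun A ^^ k) x"
  have "{z \<in> A. x < z \<and> z < sfun A ?w} \<subseteq> insert ?w {z \<in> A. x < z \<and> z < ?w}"
    using sfun_gap[of _ A ?w] linorder_neq_iff by blast
  with Suc show ?case
    by (auto intro: finite_subset)
qed (metis (no_types, lifting) Collect_empty_eq finite.emptyI funpow_0 less_asym)

lemma finite_betw_pfun_funpow: "finite {z \<in> A. (pfun A ^^ k) x < z \<and> z < x}"
proof (induction k)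
  case (Suc k)
  let ?w = "(pfun A ^^ k) x"
  have "{z \<in> A. pfun A ?w < z \<and> z < x} \<subseteq> insert ?w {z \<in> A. ?w < z \<and> z < x}"
    using pfun_gap[of _ A ?w] linorder_neq_iff by blast
  with Suc show ?case
    by (auto intro: finite_subset)
qed (metis (no_types, lifting) Collect_empty_eq finite.emptyI funpow_0 less_asym)

lemma sfun_funpow_if_finite_betw:
  assumes "y \<in> A" "x < y" "finite (betw A x y)"
  shows "\<exists>k. y = (sfun A ^^ k) x"
  using assms
proof (induction "card (betw A x y)" arbitrary: y rule: less_induct)
  case less
  show ?case
  proof (cases "betw A x y = {}")
    case True
    then have "y = (sfun A ^^ 1) x"
      using less.prems by (simp add: sfun_eqI imm_succ_iff_betw)
    then show ?thesis ..
  next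
    case False
    define z where "z = Max (betw A x y)"
    have z: "z \<in> betw A x y" "\<And>w. w \<in> betw A x y \<Longrightarrow> w \<le> z"
      using False less.prems(3) by (simp_all add: z_def)
    then have "z \<in> A" "x < z" "z < y"
      using less.prems(2) by (simp_all add: betw_less)
    have "betw A x z \<subset> betw A x y"
      using z \<open>x < z\<close> \<open>z < y\<close> by (auto simp: betw_less)
    then have "card (betw A x z) < card (betw A x y)" "finite (betw A x z)"
      using less.prems(3) by (auto intro: psubset_card_mono finite_subset)
    then obtain k where "z = (sfun A ^^ k) x"
      using less.hyps \<open>z \<in> A\<close> \<open>x < z\<close> by blast
    moreover have "imm_succ A z y"
      using z \<open>z < y\<close> less.prems by (fastforce simp: imm_succ_def betw_less)
    ultimately have "y = (sfun A ^^ Suc k) x"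
      by (simp add: sfun_eqI)
    then show ?thesis ..
  qed
qed

lemma pfun_funpow_if_finite_betw:
  assumes "y \<in> A" "y < x" "finite (betw A y x)"
  shows "\<exists>k. y = (pfun A ^^ k) x"
  using assms
proof (induction "card (betw A y x)" arbitrary: y rule: less_induct)
  case less
  show ?case
  proof (cases "betw A y x = {}")
    case True
    then have "y = (pfun A ^^ 1) x"
      using less.prems by (simp add: pfun_eqI imm_pred_iff_betw)
    then show ?thesis ..
  next
    case False
    define z where "z = Min (betw A y x)"
    have z: "z \<in> betw A y x" "\<And>w. w \<in> betw A y x \<Longrightarrow> z \<le> w"
      using False less.prems(3) by (simp_all add: z_def)
    then have "z \<in> A" "y < z" "z < x"
      using less.prems(2) by (simp_all add: betw_less)
    have "betw A z x \<subset> betw A y x"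
      using z \<open>y < z\<close> \<open>z < x\<close> by (auto simp: betw_less)
    then have "card (betw A z x) < card (betw A y x)" "finite (betw A z x)"
      using less.prems(3) by (auto intro: psubset_card_mono finite_subset)
    then obtain k where "z = (pfun A ^^ k) x"
      using less.hyps \<open>z \<in> A\<close> \<open>z < x\<close> by blast
    moreover have "imm_pred A z y"
      using z \<open>y < z\<close> less.prems by (fastforce simp: imm_pred_def betw_less)
    ultimately have "y = (pfun A ^^ Suc k) x"
      by (simp add: pfun_eqI)
    then show ?thesis ..
  qed
qed

lemma succs_eq_sfun_funpow:
  assumes "x \<in> A"
  shows "succs A x = (\<lambda>k. (sfun A ^^ k) x) ` {k. x < (sfun A ^^ k) x}"
proof (intro set_eqI iffI)
  fix y
  assume "y \<in> succs A x"
  then obtain k where "y = (sfun A ^^ k) x" "x < y"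
    unfolding succs_def using sfun_funpow_if_finite_betw[of y A x] by blast
  then show "y \<in> (\<lambda>k. (sfun A ^^ k) x) ` {k. x < (sfun A ^^ k) x}"
    by blast
next
  fix y
  assume "y \<in> (\<lambda>k. (sfun A ^^ k) x) ` {k. x < (sfun A ^^ k) x}"
  then obtain k where "y = (sfun A ^^ k) x" "x < y"
    by blast
  then show "y \<in> succs A x"
    using assms sfun_funpow_in finite_betw_sfun_funpow[of A x k]
    unfolding succs_def by (simp add: betw_less)
qed

lemma preds_eq_pfun_funpow:
  assumes "x \<in> A"
  shows "preds A x = (\<lambda>k. (pfun A ^^ k) x) ` {k. (pfun A ^^ k) x < x}"
proof (intro set_eqI iffI)
  fix y
  assume "y \<in> preds A x"
  then obtain k where "y = (pfun A ^^ k) x" "y < x"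
    unfolding preds_def using pfun_funpow_if_finite_betw[of y A x] by blast
  then show "y \<in> (\<lambda>k. (pfun A ^^ k) x) ` {k. (pfun A ^^ k) x < x}"
    by blast
next
  fix y
  assume "y \<in> (\<lambda>k. (pfun A ^^ k) x) ` {k. (pfun A ^^ k) x < x}"
  then obtain k where "y = (pfun A ^^ k) x" "y < x"
    by blast
  then show "y \<in> preds A x"
    using assms pfun_funpow_in finite_betw_pfun_funpow[of A k x]
    unfolding preds_def by (simp add: betw_less)
qed

lemma betw_eq_succs_less:
  assumes "y \<in> succs A x"
  shows "betw A x y = {z \<in> succs A x. z < y}"
proof (intro set_eqI iffI)
  fix z
  assume z: "z \<in> betw A x y"
  then have "betw A x z \<subseteq> betw A x y"
    using assms by (auto simp: succs_def betw_less)
  then have "finite (betw A x z)"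
    using assms by (auto simp: succs_def intro: finite_subset)
  then show "z \<in> {z \<in> succs A x. z < y}"
    using z assms by (auto simp: succs_def betw_less)
next
  fix z
  assume "z \<in> {z \<in> succs A x. z < y}"
  then show "z \<in> betw A x y"
    using assms by (auto simp: succs_def betw_less)
qed

lemma Adj_rel_commute: "Adj_rel A k x y \<longleftrightarrow> Adj_rel A k y x"
  by (simp add: Adj_rel_def betw_commute)

lemma Adj_rel_iff_succs:
  assumes "x < y" "y \<in> A"
  shows "Adj_rel A k x y \<longleftrightarrow> y \<in> succs A x \<and> card {z \<in> succs A x. z < y} = k"
proof (cases "y \<in> succs A x")
  case True
  moreover have "finite (betw A x y)"
    using True by (simp add: succs_def)
  ultimately show ?thesis
    by (simp add: Adj_rel_def betw_eq_succs_less)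
next
  case False
  then have "infinite (betw A x y)"
    using assms by (simp add: succs_def)
  then show ?thesis
    using False by (simp add: Adj_rel_def)
qed

section \<open>Order automorphisms\<close>

lemma betw_image_order_automorphism:
  assumes g: "bij_betw g A A" "order_iso_on A g" and "x \<in> A" "y \<in> A" "x < y"
  shows "betw A (g x) (g y) = g ` betw A x y"
proof -
  have "g x < g y" and less_iff: "\<And>z. z \<in> A \<Longrightarrow> (g x < g z \<longleftrightarrow> x < z) \<and> (g z < g y \<longleftrightarrow> z < y)"
    using assms unfolding order_iso_on_def by blast+
  have "betw A (g x) (g y) = {w \<in> g ` A. g x < w \<and> w < g y}"
    using g(1) \<open>g x < g y\<close> by (simp add: betw_less bij_betw_def)
  also have "\<dots> = g ` {z \<in> A. g x < g z \<and> g z < g y}"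
    by blast
  also have "{z \<in> A. g x < g z \<and> g z < g y} = betw A x y"
    using less_iff \<open>x < y\<close> by (auto simp: betw_less)
  finally show ?thesis .
qed

lemma imm_succ_order_automorphism_iff:
  assumes g: "bij_betw g A A" "order_iso_on A g" and "x \<in> A" "y \<in> A"
  shows "imm_succ A (g x) (g y) \<longleftrightarrow> imm_succ A x y"
proof -
  have "g y \<in> A" "g x < g y \<longleftrightarrow> x < y"
    using assms by (auto simp: order_iso_on_def bij_betw_def)
  then show ?thesis
    using assms betw_image_order_automorphism[OF g, of x y]
    by (auto simp: imm_succ_iff_betw)
qed

lemma imm_pred_order_automorphism_iff:
  assumes g: "bij_betw g A A" "order_iso_on A g" and "x \<in> A" "y \<in> A"
  shows "imm_pred A (g x) (g y) \<longleftrightarrow> imm_pred A x y"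
proof -
  have "g y \<in> A" "g y < g x \<longleftrightarrow> y < x"
    using assms by (auto simp: order_iso_on_def bij_betw_def)
  then show ?thesis
    using assms betw_image_order_automorphism[OF g, of y x]
    by (auto simp: imm_pred_iff_betw)
qed

lemma sfun_order_automorphism:
  assumes g: "bij_betw g A A" "order_iso_on A g" and x: "x \<in> A"
  shows "g (sfun A x) = sfun A (g x)"
proof (cases "sfun A x = x")
  case False
  then have "imm_succ A (g x) (g (sfun A x))"
    using imm_succ_order_automorphism_iff[OF g x] imm_succ_sfun sfun_in x by blast
  then show ?thesis
    by (simp add: sfun_eqI)
next
  case True
  show ?thesis
  proof (rule ccontr)
    assume "g (sfun A x) \<noteq> sfun A (g x)"
    then have "imm_succ A (g x) (sfun A (g x))"
      using True imm_succ_sfun by metis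
    moreover obtain y where "y \<in> A" "sfun A (g x) = g y"
      using g(1) x sfun_in[of "g x" A] by (metis bij_betwE bij_betw_imp_surj_on imageE)
    ultimately have "imm_succ A x y"
      using imm_succ_order_automorphism_iff[OF g x] by simp
    then show False
      using True sfun_eqI[of A x y] by (simp add: imm_succ_def)
  qed
qed

lemma pfun_order_automorphism:
  assumes g: "bij_betw g A A" "order_iso_on A g" and x: "x \<in> A"
  shows "g (pfun A x) = pfun A (g x)"
proof (cases "pfun A x = x")
  case False
  then have "imm_pred A (g x) (g (pfun A x))"
    using imm_pred_order_automorphism_iff[OF g x] imm_pred_pfun pfun_in x by blast
  then show ?thesis
    by (simp add: pfun_eqI)
next
  case True
  show ?thesis
  proof (rule ccontr)
    assume "g (pfun A x) \<noteq> pfun A (g x)"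
    then have "imm_pred A (g x) (pfun A (g x))"
      using True imm_pred_pfun by metis
    moreover obtain y where "y \<in> A" "pfun A (g x) = g y"
      using g(1) x pfun_in[of "g x" A] by (metis bij_betwE bij_betw_imp_surj_on imageE)
    ultimately have "imm_pred A x y"
      using imm_pred_order_automorphism_iff[OF g x] by simp
    then show False
      using True pfun_eqI[of A x y] by (simp add: imm_pred_def)
  qed
qed

lemma sp_automorphismI:
  assumes "bij_betw g A A" "order_iso_on A g"
  shows "sp_automorphism A g"
  unfolding sp_automorphism_def
  using assms sfun_order_automorphism[OF assms] pfun_order_automorphism[OF assms] by blast

section \<open>Partial sp-isomorphisms of sp-closed sets\<close>

lemma sp_closure_subset:
  assumes "B \<subseteq> A"
  shows "sp_closure A B \<subseteq> A"
proof
  fix x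
  assume "x \<in> sp_closure A B"
  then show "x \<in> A"
    by induction (use assms in \<open>auto simp: sfun_in pfun_in\<close>)
qed

lemma eq_on_sp_closure:
  assumes "\<forall>x\<in>B. g x = f x"
    and "\<forall>x\<in>sp_closure A B. g (sfun A x) = sfun A (g x) \<and> g (pfun A x) = pfun A (g x)"
    and "\<forall>x\<in>sp_closure A B. f (sfun A x) = sfun A (f x) \<and> f (pfun A x) = pfun A (f x)"
    and "x \<in> sp_closure A B"
  shows "g x = f x"
  using assms(4)
  by (induction rule: sp_closure.induct) (use assms(1-3) in auto)

lemma Cnm_preserving_subset:
  assumes "Cnm_preserving n m A C f" "B \<subseteq> C"
  shows "Cnm_preserving n m A B f"
  using assms unfolding Cnm_preserving_def order_iso_on_def by blast

locale sp_partial_iso =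
  fixes A C :: "'a::linorder set" and f :: "'a \<Rightarrow> 'a"
  assumes subset: "C \<subseteq> A"
    and sfun_closed: "x \<in> C \<Longrightarrow> sfun A x \<in> C"
    and pfun_closed: "x \<in> C \<Longrightarrow> pfun A x \<in> C"
    and image_subset: "f ` C \<subseteq> A"
    and iso: "order_iso_on C f"
    and commute_sfun: "x \<in> C \<Longrightarrow> f (sfun A x) = sfun A (f x)"
    and commute_pfun: "x \<in> C \<Longrightarrow> f (pfun A x) = pfun A (f x)"
begin

lemma less_iff: "x \<in> C \<Longrightarrow> y \<in> C \<Longrightarrow> f x < f y \<longleftrightarrow> x < y"
  using iso by (simp add: order_iso_on_def)

lemma inj: "inj_on f C"
  by (rule inj_onI) (metis less_iff linorder_neq_iff)

lemma sfun_funpow_closed: "x \<in> C \<Longrightarrow> (sfun A ^^ k) x \<in> C"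
  by (induction k) (simp_all add: sfun_closed)

lemma pfun_funpow_closed: "x \<in> C \<Longrightarrow> (pfun A ^^ k) x \<in> C"
  by (induction k) (simp_all add: pfun_closed)

lemma commute_sfun_funpow: "x \<in> C \<Longrightarrow> f ((sfun A ^^ k) x) = (sfun A ^^ k) (f x)"
  by (induction k) (simp_all add: commute_sfun sfun_funpow_closed)

lemma commute_pfun_funpow: "x \<in> C \<Longrightarrow> f ((pfun A ^^ k) x) = (pfun A ^^ k) (f x)"
  by (induction k) (simp_all add: commute_pfun pfun_funpow_closed)

lemma succs_subset:
  assumes "x \<in> C"
  shows "succs A x \<subseteq> C"
  using assms by (auto simp: succs_eq_sfun_funpow[OF subsetD[OF subset assms]] sfun_funpow_closed)

lemma preds_subset:
  assumes "x \<in> C"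
  shows "preds A x \<subseteq> C"
  using assms by (auto simp: preds_eq_pfun_funpow[OF subsetD[OF subset assms]] pfun_funpow_closed)

lemma image_succs:
  assumes x: "x \<in> C"
  shows "f ` succs A x = succs A (f x)"
proof -
  have "{k. f x < (sfun A ^^ k) (f x)} = {k. x < (sfun A ^^ k) x}"
    using x by (simp flip: commute_sfun_funpow add: less_iff sfun_funpow_closed)
  then show ?thesis
    using x subset image_subset
    by (simp add: succs_eq_sfun_funpow image_image commute_sfun_funpow subsetD image_subset_iff)
qed

lemma image_preds:
  assumes x: "x \<in> C"
  shows "f ` preds A x = preds A (f x)"
proof -
  have "{k. (pfun A ^^ k) (f x) < f x} = {k. (pfun A ^^ k) x < x}"
    using x by (simp flip: commute_pfun_funpow add: less_iff pfun_funpow_closed)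
  then show ?thesis
    using x subset image_subset
    by (simp add: preds_eq_pfun_funpow image_image commute_pfun_funpow subsetD image_subset_iff)
qed

lemma S_rel_iff:
  assumes "x \<in> C"
  shows "S_rel A i (f x) \<longleftrightarrow> S_rel A i x"
proof -
  have "inj_on f (succs A x)"
    using inj succs_subset[OF assms] by (rule inj_on_subset)
  then show ?thesis
    unfolding S_rel_def image_succs[OF assms, symmetric] by (simp add: card_image finite_image_iff)
qed

lemma P_rel_iff:
  assumes "x \<in> C"
  shows "P_rel A j (f x) \<longleftrightarrow> P_rel A j x"
proof -
  have "inj_on f (preds A x)"
    using inj preds_subset[OF assms] by (rule inj_on_subset)
  then show ?thesis
    unfolding P_rel_def image_preds[OF assms, symmetric] by (simp add: card_image finite_image_iff)
qed

lemma Adj_rel_less_iff: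
  assumes x: "x \<in> C" and y: "y \<in> C" and "x < y"
  shows "Adj_rel A k (f x) (f y) \<longleftrightarrow> Adj_rel A k x y"
proof -
  have mem_iff: "f y \<in> succs A (f x) \<longleftrightarrow> y \<in> succs A x"
    using inj succs_subset[OF x] y by (simp add: image_succs[OF x, symmetric] inj_on_image_mem_iff)
  have "{w \<in> succs A (f x). w < f y} = {w \<in> f ` succs A x. w < f y}"
    by (simp add: image_succs[OF x])
  also have "\<dots> = f ` {z \<in> succs A x. f z < f y}"
    by blast
  also have "{z \<in> succs A x. f z < f y} = {z \<in> succs A x. z < y}"
    using succs_subset[OF x] y less_iff by blast
  finally have image_less: "{w \<in> succs A (f x). w < f y} = f ` {z \<in> succs A x. z < y}" .
  have "inj_on f {z \<in> succs A x. z < y}"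
    using inj succs_subset[OF x] by (auto intro: inj_on_subset)
  moreover have "f x < f y" "f y \<in> A" "y \<in> A"
    using assms less_iff image_subset subset by auto
  ultimately show ?thesis
    using \<open>x < y\<close> mem_iff image_less by (simp add: Adj_rel_iff_succs card_image)
qed

lemma Adj_rel_iff:
  assumes "x \<in> C" "y \<in> C"
  shows "Adj_rel A k (f x) (f y) \<longleftrightarrow> Adj_rel A k x y"
proof (cases x y rule: linorder_cases)
  case less
  then show ?thesis
    using Adj_rel_less_iff assms by blast
next
  case equal
  then show ?thesis
    by (simp add: Adj_rel_def betw_self)
next
  case greater
  then show ?thesis
    using Adj_rel_less_iff assms Adj_rel_commute by blast
qed

lemma Cnm_preserving: "Cnm_preserving n m A C f"
  using iso S_rel_iff P_rel_iff Adj_rel_iff by (simp add: Cnm_preserving_def)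

end

theorem mainTheorem6:
  fixes n m :: enat and A :: "'a::linorder set"
  assumes "Cnm_homogeneous n m A"
  shows "sp_homogeneous A"
  unfolding sp_homogeneous_def
proof (intro allI impI, elim conjE)
  fix B f
  assume B: "finite B" "B \<subseteq> A"
    and f: "f ` sp_closure A B \<subseteq> A" "order_iso_on (sp_closure A B) f"
    and f_commute: "\<forall>x\<in>sp_closure A B. f (sfun A x) = sfun A (f x) \<and> f (pfun A x) = pfun A (f x)"
  interpret sp_partial_iso A "sp_closure A B" f
    using sp_closure_subset[OF B(2)] f f_commute by unfold_locales (auto intro: sp_closure.intros)
  have "B \<subseteq> sp_closure A B"
    by (auto intro: sp_closure.base)
  then have "Cnm_preserving n m A B f" "f ` B \<subseteq> A"
    using Cnm_preserving_subset[OF Cnm_preserving] f(1) by blast+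
  then obtain g where g: "bij_betw g A A" "Cnm_preserving n m A A g" "\<forall>x\<in>B. g x = f x"
    using assms B unfolding Cnm_homogeneous_def by blast
  then have aut: "sp_automorphism A g"
    by (simp add: sp_automorphismI Cnm_preserving_def)
  then have "\<forall>x\<in>sp_closure A B. g (sfun A x) = sfun A (g x) \<and> g (pfun A x) = pfun A (g x)"
    using sp_closure_subset[OF B(2)] unfolding sp_automorphism_def by blast
  then have "\<forall>x\<in>sp_closure A B. g x = f x"
    using eq_on_sp_closure g(3) f_commute by blast
  with aut show "\<exists>g. sp_automorphism A g \<and> (\<forall>x\<in>sp_closure A B. g x = f x)"
    by blast
qed

end
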